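(* Let ${\cal Q}$ be a collection of partial partitions of a set $X$. Then there is a one-to-one correspondence between the minimal restricted chordal completions of ${\rm int}({\cal Q})$ and the minimal chordal sandwiches of $({\rm int^*}({\cal Q}),{\rm forb}({\cal Q}))$.
   Context: A partial partition of $X$ is a partition $A_1|\ldots|A_t$ ($t\geq 2$) of a non-empty subset of $X$; the $A_i$ are its cells. The partial partition intersection graph ${\rm int}({\cal Q})$ has vertex set $\{(A,\pi): A \text{ is a cell of } \pi\in{\cal Q}\}$, with $(A,\pi)$ and $(A',\pi')$ adjacent iff $A\cap A'\neq\emptyset$. A graph is chordal if it has no induced cycle of length at least four; a chordal completion of $G=(V,E)$ is a chordal graph $(V,E')$ with $E\subseteq E'$. A restricted chordal completion of ${\rm int}({\cal Q})$ is a chordal completion $G'$ of ${\rm int}({\cal Q})$ such that whenever $A_1,A_2$ are distinct cells of the same $\pi\in{\cal Q}$, $(A_1,\pi)$ and $(A_2,\pi)$ are not adjacent in $G'$; it is minimal if no proper subgraph of $G'$ is a restricted chordal completion of ${\rm int}({\cal Q})$. The cell intersection graph ${\rm int^*}({\cal Q})$ has vertex set $\{A: A \text{ is a cell of some } \pi\in{\cal Q}\}$, with $A,A'$ adjacent iff $A\cap A'\neq\emptyset$. The graph ${\rm forb}({\cal Q})$ has the same vertex set, with $A,A'$ adjacent iff $A,A'$ are (distinct) cells of some common $\pi\in{\cal Q}$. For graphs $G_1=(V,E_1)$, $G_2=(V,E_2)$ with $E_1\cap E_2=\emptyset$, a chordal sandwich of $(G_1,G_2)$ is a chordal graph $(V,E')$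 with $E_1\subseteq E'$ and $E'\cap E_2=\emptyset$; it is minimal if no proper subgraph of it is a chordal sandwich of $(G_1,G_2)$. *)

theory Defs
  imports Main
begin

definition is_graph :: "'v set \<Rightarrow> 'v set set \<Rightarrow> bool" where
  "is_graph V E \<longleftrightarrow> (\<forall>e\<in>E. \<exists>u v. u \<noteq> v \<and> u \<in> V \<and> v \<in> V \<and> e = {u, v})"

definition induced_cycle :: "'v set \<Rightarrow> 'v set set \<Rightarrow> 'v list \<Rightarrow> bool" where
  "induced_cycle V E cs \<longleftrightarrow>
     (let k = length cs in
       k \<ge> 4 \<and> distinct cs \<and> set cs \<subseteq> V \<and>
       (\<forall>i<k. {cs ! i, cs ! ((i + 1) mod k)} \<in> E) \<and>
       (\<forall>i<k. \<forall>j<k. i \<noteq> j \<and> j \<noteq> (i + 1) mod k \<and> i \<noteq> (j + 1) mod k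
           \<longrightarrow> {cs ! i, cs ! j} \<notin> E))"

definition chordal :: "'v set \<Rightarrow> 'v set set \<Rightarrow> bool" where
  "chordal V E \<longleftrightarrow> is_graph V E \<and> \<not> (\<exists>cs. induced_cycle V E cs)"

definition chordal_completion :: "'v set \<Rightarrow> 'v set set \<Rightarrow> 'v set set \<Rightarrow> bool" where
  "chordal_completion V E E' \<longleftrightarrow> chordal V E' \<and> E \<subseteq> E'"

definition chordal_sandwich :: "'v set \<Rightarrow> 'v set set \<Rightarrow> 'v set set \<Rightarrow> 'v set set \<Rightarrow> bool" where
  "chordal_sandwich V E1 E2 E' \<longleftrightarrow> chordal V E' \<and> E1 \<subseteq> E' \<and> E' \<inter> E2 = {}"

definition minimal_chordal_sandwich :: "'v set \<Rightarrow> 'v set set \<Rightarrow> 'v set set \<Rightarrow> 'v set set \<Rightarrow> bool" where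
  "minimal_chordal_sandwich V E1 E2 E' \<longleftrightarrow> chordal_sandwich V E1 E2 E' \<and>
     (\<forall>E''. E'' \<subset> E' \<longrightarrow> \<not> chordal_sandwich V E1 E2 E'')"

definition partial_partition :: "'a set \<Rightarrow> 'a set set \<Rightarrow> bool" where
  "partial_partition X \<pi> \<longleftrightarrow>
     (\<forall>A\<in>\<pi>. A \<noteq> {} \<and> A \<subseteq> X) \<and>
     (\<forall>A\<in>\<pi>. \<forall>B\<in>\<pi>. A \<noteq> B \<longrightarrow> A \<inter> B = {}) \<and>
     (\<exists>A\<in>\<pi>. \<exists>B\<in>\<pi>. A \<noteq> B)"

definition int_vertices :: "'a set set set \<Rightarrow> ('a set \<times> 'a set set) set" where
  "int_vertices Q = {(A, \<pi>). \<pi> \<in> Q \<and> A \<in> \<pi>}"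

definition int_edges :: "'a set set set \<Rightarrow> ('a set \<times> 'a set set) set set" where
  "int_edges Q = {{v, w} | v w. v \<in> int_vertices Q \<and> w \<in> int_vertices Q \<and> v \<noteq> w
                              \<and> fst v \<inter> fst w \<noteq> {}}"

definition restricted_chordal_completion ::
    "'a set set set \<Rightarrow> ('a set \<times> 'a set set) set set \<Rightarrow> bool" where
  "restricted_chordal_completion Q E' \<longleftrightarrow>
     chordal_completion (int_vertices Q) (int_edges Q) E' \<and>
     (\<forall>\<pi>\<in>Q. \<forall>A1\<in>\<pi>. \<forall>A2\<in>\<pi>. A1 \<noteq> A2 \<longrightarrow> {(A1, \<pi>), (A2, \<pi>)} \<notin> E')"

definition minimal_restricted_chordal_completion ::
    "'a set set set \<Rightarrow> ('a set \<times> 'a set set) set set \<Rightarrow> bool" where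
  "minimal_restricted_chordal_completion Q E' \<longleftrightarrow> restricted_chordal_completion Q E' \<and>
     (\<forall>E''. E'' \<subset> E' \<longrightarrow> \<not> restricted_chordal_completion Q E'')"

definition cells :: "'a set set set \<Rightarrow> 'a set set" where
  "cells Q = \<Union>Q"

definition int_star_edges :: "'a set set set \<Rightarrow> 'a set set set" where
  "int_star_edges Q = {{A, B} | A B. A \<in> cells Q \<and> B \<in> cells Q \<and> A \<noteq> B \<and> A \<inter> B \<noteq> {}}"

definition forb_edges :: "'a set set set \<Rightarrow> 'a set set set" where
  "forb_edges Q = {{A, B} | A B. A \<noteq> B \<and> (\<exists>\<pi>\<in>Q. A \<in> \<pi> \<and> B \<in> \<pi>)}"

end

theory Submission
  imports Defs
begin

text \<open>A graph \<open>F\<close> on the cells lifts to the graph on the vertices \<open>(A, \<pi>)\<close> of \<open>int(Q)\<close> in which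
  two vertices are adjacent iff their cells are equal or adjacent in \<open>F\<close>; conversely a graph
  \<open>H\<close> on these vertices projects to the graph in which two cells are adjacent iff all their
  copies are adjacent in \<open>H\<close>. Lifting preserves chordality because the copies of a cell are true
  twins, and projecting preserves chordality because contracting disjoint vertex sets, with
  complete joins as the new adjacency, creates no induced cycle: split one set at a time and use
  that a vertex adjacent to both ends of an induced path in a chordal graph is adjacent to all of
  it. Hence the lift maps chordal sandwiches to restricted chordal completions, the projection
  maps back below, and the lift is an order embedding, so it restricts to a bijection between
  the minimal objects.\<close>

lemma induced_cycle_iff:
  "induced_cycle V E cs \<longleftrightarrow>
     length cs \<ge> 4 \<and> distinct cs \<and> set cs \<subseteq> V \<and>
     (\<forall>i<length cs. {cs ! i, cs ! (Suc i mod length cs)} \<in> E) \<and>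
     (\<forall>i<length cs. \<forall>j<length cs. i \<noteq> j \<and> j \<noteq> Suc i mod length cs \<and> i \<noteq> Suc j mod length cs
        \<longrightarrow> {cs ! i, cs ! j} \<notin> E)"
  unfolding induced_cycle_def Let_def by simp

lemma induced_cycle_map:
  assumes "induced_cycle V E cs" "inj_on f (set cs)" "f ` set cs \<subseteq> V'"
    and "\<And>x y. x \<in> set cs \<Longrightarrow> y \<in> set cs \<Longrightarrow> x \<noteq> y \<Longrightarrow> {f x, f y} \<in> E' \<longleftrightarrow> {x, y} \<in> E"
  shows "induced_cycle V' E' (map f cs)"
proof -
  let ?k = "length cs"
  have c: "?k \<ge> 4" "distinct cs"
    "\<And>i. i < ?k \<Longrightarrow> {cs ! i, cs ! (Suc i mod ?k)} \<in> E"
    "\<And>i j. i < ?k \<Longrightarrow> j < ?k \<Longrightarrow> i \<noteq> j \<Longrightarrow> j \<noteq> Suc i mod ?k \<Longrightarrow> i \<noteq> Suc j mod ?k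
       \<Longrightarrow> {cs ! i, cs ! j} \<notin> E"
    using assms(1) unfolding induced_cycle_iff by auto
  have ne: "cs ! i \<noteq> cs ! j" if "i < ?k" "j < ?k" "i \<noteq> j" for i j
    using c(2) that nth_eq_iff_index_eq by blast
  show ?thesis
    unfolding induced_cycle_iff
  proof (intro conjI allI impI)
    show "4 \<le> length (map f cs)" "distinct (map f cs)" "set (map f cs) \<subseteq> V'"
      using c assms(2,3) by (auto simp: distinct_map)
    fix i assume i: "i < length (map f cs)"
    have "Suc i mod ?k < ?k" "Suc i mod ?k \<noteq> i"
      using c(1) i by (auto simp: mod_Suc)
    then show "{map f cs ! i, map f cs ! (Suc i mod length (map f cs))} \<in> E'"
      using assms(4) c(3) ne i by simp
  next
    fix i j assume "i < length (map f cs)" "j < length (map f cs)"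
      "i \<noteq> j \<and> j \<noteq> Suc i mod length (map f cs) \<and> i \<noteq> Suc j mod length (map f cs)"
    then show "{map f cs ! i, map f cs ! j} \<notin> E'"
      using assms(4) c(4) ne by simp
  qed
qed

lemma induced_cycle_rotate1:
  assumes "induced_cycle V E cs"
  shows "induced_cycle V E (rotate1 cs)"
proof -
  let ?k = "length cs"
  have c: "?k \<ge> 4" "distinct cs" "set cs \<subseteq> V"
    "\<And>i. i < ?k \<Longrightarrow> {cs ! i, cs ! (Suc i mod ?k)} \<in> E"
    "\<And>i j. i < ?k \<Longrightarrow> j < ?k \<Longrightarrow> i \<noteq> j \<Longrightarrow> j \<noteq> Suc i mod ?k \<Longrightarrow> i \<noteq> Suc j mod ?k
       \<Longrightarrow> {cs ! i, cs ! j} \<notin> E"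
    using assms unfolding induced_cycle_iff by auto
  show ?thesis
    unfolding induced_cycle_iff
  proof (intro conjI allI impI)
    show "4 \<le> length (rotate1 cs)" "distinct (rotate1 cs)" "set (rotate1 cs) \<subseteq> V"
      using c by auto
    fix i assume "i < length (rotate1 cs)"
    moreover have "Suc i mod ?k < ?k" using c(1) by (intro mod_less_divisor) linarith
    ultimately show "{rotate1 cs ! i, rotate1 cs ! (Suc i mod length (rotate1 cs))} \<in> E"
      using c(4) by (simp add: nth_rotate1)
  next
    fix i j assume "i < length (rotate1 cs)" "j < length (rotate1 cs)"
      "i \<noteq> j \<and> j \<noteq> Suc i mod length (rotate1 cs) \<and> i \<noteq> Suc j mod length (rotate1 cs)"
    then have "i < ?k" "j < ?k" "Suc i mod ?k \<noteq> Suc j mod ?k"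
      "Suc j mod ?k \<noteq> Suc (Suc i mod ?k) mod ?k" "Suc i mod ?k \<noteq> Suc (Suc j mod ?k) mod ?k"
      using c(1) by (auto simp: mod_Suc split: if_splits)
    moreover have "Suc i mod ?k < ?k" "Suc j mod ?k < ?k"
      using c(1) by (intro mod_less_divisor; linarith)+
    ultimately show "{rotate1 cs ! i, rotate1 cs ! j} \<notin> E"
      using c(5)[of "Suc i mod ?k" "Suc j mod ?k"] by (simp add: nth_rotate1)
  qed
qed

lemma induced_cycle_rotate: "induced_cycle V E cs \<Longrightarrow> induced_cycle V E (rotate n cs)"
  by (induction n) (auto intro: induced_cycle_rotate1)

lemma induced_cycle_rotate_to_front:
  assumes "induced_cycle V E cs" "x \<in> set cs"
  obtains ys where "induced_cycle V E (x # ys)" "set cs = insert x (set ys)"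
proof -
  obtain m where m: "m < length cs" "cs ! m = x" using assms(2) by (meson in_set_conv_nth)
  have "cs \<noteq> []" using m by auto
  then have "hd (rotate m cs) = x" "rotate m cs \<noteq> []"
    using m hd_rotate_conv_nth[of cs m] by auto
  then have "rotate m cs = x # tl (rotate m cs)" by (metis list.collapse)
  then show ?thesis
    using that[of "tl (rotate m cs)"] induced_cycle_rotate[OF assms(1), of m]
    by (metis list.set(2) set_rotate)
qed

definition induced_path :: "'v set \<Rightarrow> 'v set set \<Rightarrow> 'v list \<Rightarrow> bool" where
  "induced_path V E ys \<longleftrightarrow> distinct ys \<and> set ys \<subseteq> V \<and>
     (\<forall>i. Suc i < length ys \<longrightarrow> {ys ! i, ys ! Suc i} \<in> E) \<and>
     (\<forall>i j. Suc i < j \<and> j < length ys \<longrightarrow> {ys ! i, ys ! j} \<notin> E)"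

lemma induced_cycle_Cons_imp_induced_path:
  assumes "induced_cycle V E (x # ys)"
  shows "induced_path V E ys" "length ys \<ge> 3" "x \<notin> set ys"
    "{x, hd ys} \<in> E" "{x, last ys} \<in> E" "{x, ys ! 1} \<notin> E"
proof -
  let ?k = "Suc (length ys)"
  have c: "length ys \<ge> 3" "distinct (x # ys)" "set (x # ys) \<subseteq> V"
    "\<And>i. i < ?k \<Longrightarrow> {(x # ys) ! i, (x # ys) ! (Suc i mod ?k)} \<in> E"
    "\<And>i j. i < ?k \<Longrightarrow> j < ?k \<Longrightarrow> i \<noteq> j \<Longrightarrow> j \<noteq> Suc i mod ?k \<Longrightarrow> i \<noteq> Suc j mod ?k
       \<Longrightarrow> {(x # ys) ! i, (x # ys) ! j} \<notin> E"
    using assms unfolding induced_cycle_iff by auto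
  show "length ys \<ge> 3" "x \<notin> set ys" using c(1,2) by auto
  have ne: "ys \<noteq> []" using c(1) by auto
  show "{x, hd ys} \<in> E" using c(4)[of 0] ne by (simp add: hd_conv_nth)
  show "{x, last ys} \<in> E" using c(4)[of "length ys"] ne by (simp add: last_conv_nth insert_commute)
  show "{x, ys ! 1} \<notin> E" using c(5)[of 0 2] c(1) by simp
  show "induced_path V E ys"
    unfolding induced_path_def
  proof (intro conjI allI impI)
    show "distinct ys" "set ys \<subseteq> V" using c(2,3) by auto
    fix i assume "Suc i < length ys"
    then show "{ys ! i, ys ! Suc i} \<in> E" using c(4)[of "Suc i"] by simp
  next
    fix i j assume "Suc i < j \<and> j < length ys"
    then show "{ys ! i, ys ! j} \<notin> E" using c(5)[of "Suc i" "Suc j"] by (auto simp: mod_Suc)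
  qed
qed

lemma induced_path_take: "induced_path V E ys \<Longrightarrow> induced_path V E (take m ys)"
  unfolding induced_path_def by (auto dest: in_set_takeD)

lemma induced_path_drop: "induced_path V E ys \<Longrightarrow> induced_path V E (drop m ys)"
  unfolding induced_path_def by (auto dest: in_set_dropD)

lemma induced_path_imp_induced_cycle_Cons:
  assumes p: "induced_path V E ys" and l: "length ys \<ge> 3" and x: "x \<in> V" "x \<notin> set ys"
    and ends: "{x, hd ys} \<in> E" "{x, last ys} \<in> E"
    and inner: "\<And>i. 0 < i \<Longrightarrow> Suc i < length ys \<Longrightarrow> {x, ys ! i} \<notin> E"
  shows "induced_cycle V E (x # ys)"
proof -
  let ?n = "length ys"
  have p': "distinct ys" "set ys \<subseteq> V" "\<And>i. Suc i < ?n \<Longrightarrow> {ys ! i, ys ! Suc i} \<in> E"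
    "\<And>i j. Suc i < j \<Longrightarrow> j < ?n \<Longrightarrow> {ys ! i, ys ! j} \<notin> E"
    using p unfolding induced_path_def by auto
  have ne: "ys \<noteq> []" using l by auto
  show ?thesis
    unfolding induced_cycle_iff
  proof (intro conjI allI impI)
    show "4 \<le> length (x # ys)" "distinct (x # ys)" "set (x # ys) \<subseteq> V"
      using l p' x by auto
    fix i assume i: "i < length (x # ys)"
    show "{(x # ys) ! i, (x # ys) ! (Suc i mod length (x # ys))} \<in> E"
    proof (cases "i = ?n")
      case True
      then show ?thesis using ends(2) ne by (simp add: last_conv_nth insert_commute nth_Cons')
    next
      case False
      then show ?thesis
        using ends(1) ne p'(3)[of "i - 1"] i by (cases i) (auto simp: hd_conv_nth)
    qed
  next
    fix i j assume ij: "i < length (x # ys)" "j < length (x # ys)"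
      "i \<noteq> j \<and> j \<noteq> Suc i mod length (x # ys) \<and> i \<noteq> Suc j mod length (x # ys)"
    have md: "Suc c mod Suc ?n = (if c = ?n then 0 else Suc c)" if "c \<le> ?n" for c
      using that by auto
    have ij': "i \<le> ?n" "j \<le> ?n" "i \<noteq> j"
      "j \<noteq> (if i = ?n then 0 else Suc i)" "i \<noteq> (if j = ?n then 0 else Suc j)"
      using ij md[of i] md[of j] by auto
    show "{(x # ys) ! i, (x # ys) ! j} \<notin> E"
    proof (cases i)
      case 0
      then obtain b where "j = Suc b" using ij' by (cases j) auto
      then show ?thesis using inner[of b] ij' 0 ne by (auto split: if_splits)
    next
      case (Suc a)
      show ?thesis
      proof (cases j)
        case 0
        then show ?thesis
          using inner[of a] ij' Suc ne by (auto simp: insert_commute split: if_splits)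
      next
        case (Suc b)
        then have "Suc a < b \<or> Suc b < a" using ij' \<open>i = Suc a\<close> by (auto split: if_splits)
        then show ?thesis using p'(4)[of a b] p'(4)[of b a] Suc \<open>i = Suc a\<close> ij'
          by (auto simp: insert_commute)
      qed
    qed
  qed
qed

text \<open>If the first neighbour of \<open>x\<close> after the start of the path is not the second vertex, it
  closes an induced cycle with \<open>x\<close>; otherwise drop the first vertex and recurse.\<close>
lemma induced_path_ends_neighbour:
  assumes no_cycle: "\<nexists>cs. induced_cycle V E cs"
    and "induced_path V E ys" "length ys \<ge> 2" "x \<in> V" "x \<notin> set ys"
    and "{x, hd ys} \<in> E" "{x, last ys} \<in> E"
  shows "\<forall>y\<in>set ys. {x, y} \<in> E"
  using assms(2-)
proof (induction ys rule: length_induct)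
  case (1 ys)
  let ?n = "length ys"
  have ne: "ys \<noteq> []" using "1.prems" by auto
  define m where "m = (LEAST i. 0 < i \<and> i < ?n \<and> {x, ys ! i} \<in> E)"
  have "0 < m \<and> m < ?n \<and> {x, ys ! m} \<in> E"
    unfolding m_def
    by (rule LeastI[of _ "?n - 1"]) (use "1.prems" ne in \<open>auto simp: last_conv_nth\<close>)
  then have m: "0 < m" "m < ?n" "{x, ys ! m} \<in> E" by auto
  have before_m: "{x, ys ! i} \<notin> E" if "0 < i" "i < m" for i
    using not_less_Least[of i "\<lambda>i. 0 < i \<and> i < ?n \<and> {x, ys ! i} \<in> E"] that m(2)
    unfolding m_def[symmetric] by auto
  consider "?n = 2" | "m = 1" "?n > 2" | "m \<ge> 2" using m(1) "1.prems"(2) by linarith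
  then show ?case
  proof cases
    case 1
    then have "set ys = {hd ys, last ys}"
      by (cases ys) (auto simp: numeral_2_eq_2 length_Suc_conv)
    then show ?thesis using "1.prems" by simp
  next
    case 2
    obtain a zs where ys: "ys = a # zs" using ne by (cases ys) auto
    have "zs \<noteq> []" using 2 unfolding ys by auto
    then have zs: "hd zs = ys ! m" "last zs = last ys" "length zs < ?n" "2 \<le> length zs"
      "x \<notin> set zs" "induced_path V E zs"
      using 2 "1.prems"(4) induced_path_drop[OF "1.prems"(1), of 1] unfolding ys
      by (auto simp: hd_conv_nth)
    have "\<forall>y\<in>set zs. {x, y} \<in> E"
      using "1.IH"[rule_format, OF zs(3,6,4) "1.prems"(3) zs(5)] zs(1,2) m(3) "1.prems"(6) by simp
    then show ?thesis using "1.prems"(5) unfolding ys by simp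
  next
    case 3
    let ?zs = "take (Suc m) ys"
    have "induced_cycle V E (x # ?zs)"
    proof (rule induced_path_imp_induced_cycle_Cons[OF induced_path_take[OF "1.prems"(1)]])
      show "3 \<le> length ?zs" using m 3 by simp
      show "x \<in> V" "x \<notin> set ?zs" using "1.prems"(3,4) by (auto dest: in_set_takeD)
      show "{x, hd ?zs} \<in> E" using "1.prems"(5) ne by simp
      show "{x, last ?zs} \<in> E" using m by (simp add: take_Suc_conv_app_nth)
      show "{x, ?zs ! i} \<notin> E" if "0 < i" "Suc i < length ?zs" for i
        using before_m that m(2) by simp
    qed
    then show ?thesis using no_cycle by blast
  qed
qed

lemma induced_path_transfer:
  assumes "induced_path V E ys" "set ys \<subseteq> V'"
    and "\<And>a b. a \<in> set ys \<Longrightarrow> b \<in> set ys \<Longrightarrow> {a, b} \<in> E' \<longleftrightarrow> {a, b} \<in> E"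
  shows "induced_path V' E' ys"
  using assms unfolding induced_path_def by auto

lemma induced_cycle_no_true_twins:
  assumes cyc: "induced_cycle V E cs" and xy: "x \<in> set cs" "y \<in> set cs" "x \<noteq> y" "{x, y} \<in> E"
    and twins: "\<And>z. z \<in> set cs \<Longrightarrow> z \<noteq> x \<Longrightarrow> z \<noteq> y \<Longrightarrow> {z, x} \<in> E \<longleftrightarrow> {z, y} \<in> E"
  shows False
proof -
  obtain ys where ys: "induced_cycle V E (x # ys)" "set cs = insert x (set ys)"
    using induced_cycle_rotate_to_front[OF cyc xy(1)] .
  note path = induced_cycle_Cons_imp_induced_path[OF ys(1)]
  have p: "distinct ys" "{ys ! 0, ys ! 1} \<in> E" "\<And>j. 1 < j \<Longrightarrow> j < length ys \<Longrightarrow> {ys ! 0, ys ! j} \<notin> E"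
    using path(1,2) unfolding induced_path_def by auto
  have hd: "hd ys = ys ! 0" using path(2) by (cases ys) auto
  obtain j where j: "j < length ys" "y = ys ! j"
    using xy ys(2) by (auto simp: in_set_conv_nth)
  consider "j = 0" | "j = 1" | "1 < j" by linarith
  then show False
  proof cases
    case 1
    have "ys ! 1 \<in> set ys" using path(2) by simp
    moreover have "ys ! 1 \<noteq> y" using p(1) j path(2) 1 by (simp add: nth_eq_iff_index_eq)
    ultimately have "{ys ! 1, x} \<in> E"
      using twins[of "ys ! 1"] p(2) ys(2) path(3) j 1 by (auto simp: insert_commute)
    then show False using path(6) by (simp add: insert_commute)
  next
    case 2
    then show False using path(6) xy(4) j by simp
  next
    case 3
    have "ys ! 0 \<in> set ys" using path(2) by (intro nth_mem) linarith
    moreover have "ys ! 0 \<noteq> y" using nth_eq_iff_index_eq[OF p(1), of 0 j] j 3 by fastforce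
    ultimately have "{ys ! 0, y} \<in> E"
      using twins[of "ys ! 0"] path(2,3,4) ys(2) hd by (auto simp: insert_commute)
    then show False using p(3) j 3 by simp
  qed
qed

lemma doubleton_mem_symmetric_iff:
  assumes "\<And>x y. R x y \<Longrightarrow> R y x"
  shows "{a, b} \<in> {{x, y} | x y. R x y} \<longleftrightarrow> R a b"
proof
  assume "{a, b} \<in> {{x, y} | x y. R x y}"
  then obtain x y where "{a, b} = {x, y}" "R x y" by blast
  then show "R a b" using assms by (auto simp: doubleton_eq_iff)
qed blast

definition quotient_edges :: "'v set set \<Rightarrow> 'v set set \<Rightarrow> 'v set set set" where
  "quotient_edges E P =
     {{C, D} | C D. C \<in> P \<and> D \<in> P \<and> C \<noteq> D \<and> (\<forall>x\<in>C. \<forall>y\<in>D. {x, y} \<in> E)}"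

lemma quotient_edges_iff:
  "{C, D} \<in> quotient_edges E P \<longleftrightarrow> C \<in> P \<and> D \<in> P \<and> C \<noteq> D \<and> (\<forall>x\<in>C. \<forall>y\<in>D. {x, y} \<in> E)"
  unfolding quotient_edges_def by (rule doubleton_mem_symmetric_iff) (fastforce simp: insert_commute)

lemma induced_cycle_quotient_singletons:
  assumes cyc: "induced_cycle P (quotient_edges E P) cs"
    and sing: "\<forall>C\<in>P. \<exists>v. C = {v}" and "\<Union>P \<subseteq> V"
  shows "induced_cycle V E (map the_elem cs)"
proof (rule induced_cycle_map[OF cyc])
  have sP: "set cs \<subseteq> P" using cyc unfolding induced_cycle_iff by auto
  then have elem: "C = {the_elem C}" if "C \<in> set cs" for C
    using sing that by (metis subsetD the_elem_eq)
  show "inj_on the_elem (set cs)" by (rule inj_onI) (metis elem)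
  show "the_elem ` set cs \<subseteq> V" using elem sP assms(3) by blast
  show "{the_elem C, the_elem D} \<in> E \<longleftrightarrow> {C, D} \<in> quotient_edges E P"
    if "C \<in> set cs" "D \<in> set cs" "C \<noteq> D" for C D
    using that elem[of C] elem[of D] sP unfolding quotient_edges_iff by (metis singletonD singletonI subsetD)
qed

lemma quotient_split_no_induced_cycle:
  assumes disj: "pairwise disjnt P" and C: "C \<in> P" "v \<in> C" "C \<noteq> {v}"
  defines "P' \<equiv> insert (C - {v}) (insert {v} (P - {C}))"
  assumes no_cycle: "\<nexists>cs. induced_cycle P' (quotient_edges E P') cs"
  shows "\<nexists>cs. induced_cycle P (quotient_edges E P) cs"
proof
  assume "\<exists>cs. induced_cycle P (quotient_edges E P) cs"
  then obtain cs where cs: "induced_cycle P (quotient_edges E P) cs" by blast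
  have sP: "set cs \<subseteq> P" using cs unfolding induced_cycle_iff by auto
  have agree: "{D, D'} \<in> quotient_edges E P' \<longleftrightarrow> {D, D'} \<in> quotient_edges E P"
    if "D \<in> P - {C}" "D' \<in> P - {C}" for D D'
    using that unfolding quotient_edges_iff P'_def by auto
  have disj_C: "C \<inter> D = {}" if "D \<in> P - {C}" for D
    using disj C(1) that unfolding pairwise_def disjnt_def by auto
  show False
  proof (cases "C \<in> set cs")
    case False
    have "induced_cycle P' (quotient_edges E P') (map id cs)"
      by (rule induced_cycle_map[OF cs]) (use sP False agree in \<open>auto simp: P'_def\<close>)
    then show False using no_cycle by simp
  next
    case True
    obtain ys where ys: "induced_cycle P (quotient_edges E P) (C # ys)" "set cs = insert C (set ys)"
      using induced_cycle_rotate_to_front[OF cs True] .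
    note path = induced_cycle_Cons_imp_induced_path[OF ys(1)]
    have ysP: "set ys \<subseteq> P - {C}" using ys sP path(3) by auto
    have path': "induced_path P' (quotient_edges E P') ys"
      by (rule induced_path_transfer[OF path(1)]) (use ysP agree in \<open>auto simp: P'_def\<close>)
    have "ys \<noteq> []" using path(2) by auto
    then have ys1: "ys ! 1 \<in> set ys" "hd ys \<in> set ys" "last ys \<in> set ys" using path(2) by auto
    have part_adj: "\<forall>a\<in>X. \<forall>b\<in>ys ! 1. {a, b} \<in> E" if X: "X \<in> P'" "X \<subseteq> C" "X \<noteq> {}" for X
    proof -
      have "X \<notin> set ys" using X ysP disj_C by blast
      moreover have "{X, D} \<in> quotient_edges E P'" if "D \<in> set ys" "{C, D} \<in> quotient_edges E P" for D
        using that X ysP \<open>X \<notin> set ys\<close> unfolding quotient_edges_iff P'_def by auto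
      ultimately have "\<forall>D\<in>set ys. {X, D} \<in> quotient_edges E P'"
        using path(2,4,5) ys1 by (intro induced_path_ends_neighbour[OF no_cycle path'] X(1)) auto
      then have "{X, ys ! 1} \<in> quotient_edges E P'" using ys1(1) by blast
      then show ?thesis unfolding quotient_edges_iff by blast
    qed
    have "C - {v} \<in> P'" "{v} \<in> P'" "C - {v} \<noteq> {}" using C unfolding P'_def by auto
    then have "\<forall>a\<in>C - {v}. \<forall>b\<in>ys ! 1. {a, b} \<in> E" "\<forall>b\<in>ys ! 1. {v, b} \<in> E"
      using part_adj C(2) by auto
    then have "\<forall>a\<in>C. \<forall>b\<in>ys ! 1. {a, b} \<in> E" by blast
    moreover have "ys ! 1 \<in> P" "C \<noteq> ys ! 1" using ysP ys1 by auto
    ultimately have "{C, ys ! 1} \<in> quotient_edges E P" using C(1) unfolding quotient_edges_iff by blast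
    then show False using path(6) by simp
  qed
qed

lemma pairwise_disjnt_split:
  assumes "pairwise disjnt P" "C \<in> P" "v \<in> C"
  shows "pairwise disjnt (insert (C - {v}) (insert {v} (P - {C})))"
proof -
  have "C \<inter> D = {}" if "D \<in> P - {C}" for D
    using assms(1,2) that unfolding pairwise_def disjnt_def by auto
  then show ?thesis
    unfolding pairwise_insert using pairwise_subset[OF assms(1), of "P - {C}"] assms(3)
    by (auto simp: disjnt_def)
qed

lemma sum_card_split_less:
  assumes "finite P" "pairwise disjnt P" "C \<in> P" "finite C" "v \<in> C" "C \<noteq> {v}"
  shows "(\<Sum>D\<in>insert (C - {v}) (insert {v} (P - {C})). card D - 1) < (\<Sum>D\<in>P. card D - 1)"
proof -
  have "C \<inter> D = {}" if "D \<in> P - {C}" for D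
    using assms(2,3) that unfolding pairwise_def disjnt_def by auto
  then have new: "C - {v} \<notin> P - {C}" "{v} \<notin> P - {C}" "C - {v} \<noteq> {v}" "C - {v} \<noteq> {}"
    using assms(5,6) by blast+
  have "card (C - {v}) > 0" using assms(4) new(4) by (simp add: card_gt_0_iff)
  moreover have "card C = Suc (card (C - {v}))" using card_Suc_Diff1[OF assms(4,5)] by simp
  moreover have "(\<Sum>D\<in>insert (C - {v}) (insert {v} (P - {C})). card D - 1)
      = (card (C - {v}) - 1) + (\<Sum>D\<in>P - {C}. card D - 1)"
    using assms(1) new by simp
  moreover have "(\<Sum>D\<in>P. card D - 1) = (card C - 1) + (\<Sum>D\<in>P - {C}. card D - 1)"
    using assms(1,3) by (rule sum.remove)
  ultimately show ?thesis by linarith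
qed

lemma quotient_no_induced_cycle:
  assumes no_cycle: "\<nexists>cs. induced_cycle V E cs"
    and "finite (\<Union>P)" "\<Union>P \<subseteq> V" "{} \<notin> P" "pairwise disjnt P"
  shows "\<nexists>cs. induced_cycle P (quotient_edges E P) cs"
  using assms(2-)
proof (induction "\<Sum>C\<in>P. card C - 1" arbitrary: P rule: less_induct)
  case less
  have fin: "finite P" "\<And>C. C \<in> P \<Longrightarrow> finite C"
    using less.prems(1) finite_UnionD by (auto intro: finite_subset)
  show ?case
  proof (cases "\<forall>C\<in>P. \<exists>v. C = {v}")
    case True
    show ?thesis
    proof
      assume "\<exists>cs. induced_cycle P (quotient_edges E P) cs"
      then obtain cs where "induced_cycle P (quotient_edges E P) cs" ..
      then show False
        using induced_cycle_quotient_singletons[OF _ True less.prems(2)] no_cycle by blast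
    qed
  next
    case False
    then obtain C where "C \<in> P" "\<nexists>v. C = {v}" by blast
    moreover obtain v where "v \<in> C" using less.prems(3) \<open>C \<in> P\<close> by (metis ex_in_conv)
    ultimately have C: "C \<in> P" "v \<in> C" "C \<noteq> {v}" by auto
    define P' where "P' = insert (C - {v}) (insert {v} (P - {C}))"
    have "(\<Sum>D\<in>P'. card D - 1) < (\<Sum>D\<in>P. card D - 1)"
      unfolding P'_def using fin less.prems(4) C by (intro sum_card_split_less)
    moreover have "\<Union>P' \<subseteq> \<Union>P" using C unfolding P'_def by auto
    then have "finite (\<Union>P')" "\<Union>P' \<subseteq> V" using less.prems(1,2) by (auto intro: finite_subset)
    moreover have "{} \<notin> P'" using less.prems(3) C unfolding P'_def by auto
    moreover have "pairwise disjnt P'"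
      unfolding P'_def using less.prems(4) C(1,2) by (rule pairwise_disjnt_split)
    ultimately have "\<nexists>cs. induced_cycle P' (quotient_edges E P') cs"
      using less.hyps by blast
    then show ?thesis
      using quotient_split_no_induced_cycle[OF less.prems(4) C] unfolding P'_def by blast
  qed
qed

definition lift_edges :: "'a set set set \<Rightarrow> 'a set set set \<Rightarrow> ('a set \<times> 'a set set) set set" where
  "lift_edges Q F = {{v, w} | v w. v \<in> int_vertices Q \<and> w \<in> int_vertices Q \<and> v \<noteq> w \<and>
     (fst v = fst w \<or> {fst v, fst w} \<in> F)}"

definition proj_edges :: "'a set set set \<Rightarrow> ('a set \<times> 'a set set) set set \<Rightarrow> 'a set set set" where
  "proj_edges Q H = {{A, B} | A B. A \<in> cells Q \<and> B \<in> cells Q \<and> A \<noteq> B \<and>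
     (\<forall>v\<in>int_vertices Q. \<forall>w\<in>int_vertices Q. fst v = A \<longrightarrow> fst w = B \<longrightarrow> {v, w} \<in> H)}"

lemma lift_edges_iff:
  "{v, w} \<in> lift_edges Q F \<longleftrightarrow> v \<in> int_vertices Q \<and> w \<in> int_vertices Q \<and> v \<noteq> w \<and>
     (fst v = fst w \<or> {fst v, fst w} \<in> F)"
  unfolding lift_edges_def by (rule doubleton_mem_symmetric_iff) (fastforce simp: insert_commute)

lemma proj_edges_iff:
  "{A, B} \<in> proj_edges Q H \<longleftrightarrow> A \<in> cells Q \<and> B \<in> cells Q \<and> A \<noteq> B \<and>
     (\<forall>v\<in>int_vertices Q. \<forall>w\<in>int_vertices Q. fst v = A \<longrightarrow> fst w = B \<longrightarrow> {v, w} \<in> H)"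
  unfolding proj_edges_def by (rule doubleton_mem_symmetric_iff) (fastforce simp: insert_commute)

lemma fst_int_vertex: "v \<in> int_vertices Q \<Longrightarrow> fst v \<in> cells Q"
  unfolding int_vertices_def cells_def by auto

lemma cell_int_vertex: "A \<in> cells Q \<Longrightarrow> \<exists>\<pi>. (A, \<pi>) \<in> int_vertices Q"
  unfolding int_vertices_def cells_def by auto

lemma lift_edges_subset_iff:
  assumes "is_graph (cells Q) F"
  shows "lift_edges Q F \<subseteq> lift_edges Q F' \<longleftrightarrow> F \<subseteq> F'"
proof
  assume lift: "lift_edges Q F \<subseteq> lift_edges Q F'"
  show "F \<subseteq> F'"
  proof
    fix e assume "e \<in> F"
    then obtain A B where AB: "e = {A, B}" "A \<noteq> B" "A \<in> cells Q" "B \<in> cells Q"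
      using assms unfolding is_graph_def by meson
    obtain \<pi> \<pi>' where "(A, \<pi>) \<in> int_vertices Q" "(B, \<pi>') \<in> int_vertices Q"
      using AB(3,4) cell_int_vertex by blast
    then have "{(A, \<pi>), (B, \<pi>')} \<in> lift_edges Q F"
      using \<open>e \<in> F\<close> AB(1,2) unfolding lift_edges_iff by simp
    then have "{(A, \<pi>), (B, \<pi>')} \<in> lift_edges Q F'" using lift by blast
    then show "e \<in> F'" using AB(1,2) unfolding lift_edges_iff by simp
  qed
next
  assume "F \<subseteq> F'"
  then show "lift_edges Q F \<subseteq> lift_edges Q F'" unfolding lift_edges_def by blast
qed

lemma chordal_lift_edges:
  assumes "chordal (cells Q) F"
  shows "chordal (int_vertices Q) (lift_edges Q F)"
  unfolding chordal_def
proof (intro conjI notI)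
  show "is_graph (int_vertices Q) (lift_edges Q F)" unfolding is_graph_def lift_edges_def by blast
  assume "\<exists>cs. induced_cycle (int_vertices Q) (lift_edges Q F) cs"
  then obtain cs where cs: "induced_cycle (int_vertices Q) (lift_edges Q F) cs" by blast
  have V: "set cs \<subseteq> int_vertices Q" using cs unfolding induced_cycle_iff by auto
  have inj: "inj_on fst (set cs)"
  proof (rule inj_onI, rule ccontr)
    fix v w assume vw: "v \<in> set cs" "w \<in> set cs" "fst v = fst w" "v \<noteq> w"
    show False
    proof (rule induced_cycle_no_true_twins[OF cs vw(1,2,4)])
      show "{v, w} \<in> lift_edges Q F" using vw V unfolding lift_edges_iff by auto
      show "{z, v} \<in> lift_edges Q F \<longleftrightarrow> {z, w} \<in> lift_edges Q F"
        if "z \<in> set cs" "z \<noteq> v" "z \<noteq> w" for z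
        using that vw V unfolding lift_edges_iff by auto
    qed
  qed
  have "induced_cycle (cells Q) F (map fst cs)"
  proof (rule induced_cycle_map[OF cs inj])
    show "fst ` set cs \<subseteq> cells Q" using V fst_int_vertex by blast
    show "{fst v, fst w} \<in> F \<longleftrightarrow> {v, w} \<in> lift_edges Q F"
      if "v \<in> set cs" "w \<in> set cs" "v \<noteq> w" for v w
      using that V inj_onD[OF inj] unfolding lift_edges_iff by blast
  qed
  then show False using assms unfolding chordal_def by blast
qed

lemma restricted_chordal_completion_lift_edges:
  assumes "chordal_sandwich (cells Q) (int_star_edges Q) (forb_edges Q) F"
  shows "restricted_chordal_completion Q (lift_edges Q F)"
proof -
  have F: "chordal (cells Q) F" "int_star_edges Q \<subseteq> F" "F \<inter> forb_edges Q = {}"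
    using assms unfolding chordal_sandwich_def by auto
  have "int_edges Q \<subseteq> lift_edges Q F"
  proof
    fix e assume "e \<in> int_edges Q"
    then obtain v w where vw: "e = {v, w}" "v \<in> int_vertices Q" "w \<in> int_vertices Q" "v \<noteq> w"
      "fst v \<inter> fst w \<noteq> {}" unfolding int_edges_def by blast
    then have "fst v = fst w \<or> {fst v, fst w} \<in> int_star_edges Q"
      unfolding int_star_edges_def using fst_int_vertex by blast
    then show "e \<in> lift_edges Q F" using vw(2-4) F(2) unfolding vw(1) lift_edges_iff by blast
  qed
  moreover have "{(A1, \<pi>), (A2, \<pi>)} \<notin> lift_edges Q F"
    if "\<pi> \<in> Q" "A1 \<in> \<pi>" "A2 \<in> \<pi>" "A1 \<noteq> A2" for \<pi> A1 A2
  proof -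
    have "{A1, A2} \<in> forb_edges Q" unfolding forb_edges_def using that by blast
    then show ?thesis using F(3) that(4) unfolding lift_edges_iff by auto
  qed
  ultimately show ?thesis
    unfolding restricted_chordal_completion_def chordal_completion_def
    using chordal_lift_edges[OF F(1)] by blast
qed

lemma finite_int_vertices:
  assumes "finite X" and "\<forall>\<pi>\<in>Q. partial_partition X \<pi>"
  shows "finite (int_vertices Q)"
proof (rule finite_subset)
  show "int_vertices Q \<subseteq> Pow X \<times> Pow (Pow X)"
  proof
    fix v assume "v \<in> int_vertices Q"
    then obtain A \<pi> where v: "v = (A, \<pi>)" "\<pi> \<in> Q" "A \<in> \<pi>" unfolding int_vertices_def by blast
    then have "partial_partition X \<pi>" using assms(2) by blast
    then have "\<forall>B\<in>\<pi>. B \<noteq> {} \<and> B \<subseteq> X" unfolding partial_partition_def by (elim conjE)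
    then show "v \<in> Pow X \<times> Pow (Pow X)" using v by auto
  qed
  show "finite (Pow X \<times> Pow (Pow X))" using assms(1) by simp
qed

text \<open>The projection is the quotient of the intersection graph by the sets of copies of a
  cell.\<close>
lemma chordal_proj_edges:
  assumes fin: "finite (int_vertices Q)" and H: "chordal (int_vertices Q) H"
  shows "chordal (cells Q) (proj_edges Q H)"
  unfolding chordal_def
proof (intro conjI notI)
  show "is_graph (cells Q) (proj_edges Q H)" unfolding is_graph_def proj_edges_def by blast
  define copies where "copies A = {v \<in> int_vertices Q. fst v = A}" for A
  define P where "P = copies ` cells Q"
  have "\<nexists>cs. induced_cycle P (quotient_edges H P) cs"
  proof (rule quotient_no_induced_cycle)
    show "\<nexists>cs. induced_cycle (int_vertices Q) H cs" using H unfolding chordal_def by blast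
    show "\<Union>P \<subseteq> int_vertices Q" unfolding P_def copies_def by blast
    then show "finite (\<Union>P)" using fin by (rule finite_subset)
    show "{} \<notin> P" unfolding P_def copies_def using cell_int_vertex by fastforce
    show "pairwise disjnt P" unfolding P_def copies_def pairwise_def disjnt_def by blast
  qed
  moreover assume "\<exists>cs. induced_cycle (cells Q) (proj_edges Q H) cs"
  then obtain cs where cs: "induced_cycle (cells Q) (proj_edges Q H) cs" by blast
  have cells: "set cs \<subseteq> cells Q" using cs unfolding induced_cycle_iff by auto
  have inj: "inj_on copies (cells Q)"
  proof (rule inj_onI)
    fix A B assume "A \<in> cells Q" "copies A = copies B"
    then show "A = B" using cell_int_vertex unfolding copies_def by fastforce
  qed
  have "induced_cycle P (quotient_edges H P) (map copies cs)"
  proof (rule induced_cycle_map[OF cs])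
    show "inj_on copies (set cs)" using inj cells by (rule inj_on_subset)
    show "copies ` set cs \<subseteq> P" using cells unfolding P_def by blast
    show "{copies A, copies B} \<in> quotient_edges H P \<longleftrightarrow> {A, B} \<in> proj_edges Q H"
      if "A \<in> set cs" "B \<in> set cs" "A \<noteq> B" for A B
    proof -
      have "copies A \<noteq> copies B" using that cells inj_onD[OF inj] by blast
      then have "{copies A, copies B} \<in> quotient_edges H P \<longleftrightarrow>
          (\<forall>v\<in>copies A. \<forall>w\<in>copies B. {v, w} \<in> H)"
        using that cells unfolding quotient_edges_iff P_def by blast
      also have "\<dots> \<longleftrightarrow> {A, B} \<in> proj_edges Q H"
        using that cells unfolding proj_edges_iff copies_def by auto
      finally show ?thesis .
    qed
  qed
  ultimately show False by blast
qed

lemma lift_proj_edges_subset: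
  assumes "int_edges Q \<subseteq> H" and "\<forall>\<pi>\<in>Q. {} \<notin> \<pi>"
  shows "lift_edges Q (proj_edges Q H) \<subseteq> H"
proof
  fix e assume "e \<in> lift_edges Q (proj_edges Q H)"
  then obtain v w where vw: "e = {v, w}" "v \<in> int_vertices Q" "w \<in> int_vertices Q" "v \<noteq> w"
    "fst v = fst w \<or> {fst v, fst w} \<in> proj_edges Q H"
    unfolding lift_edges_def by blast
  show "e \<in> H"
  proof (cases "fst v = fst w")
    case True
    have "fst v \<noteq> {}" using vw(2) assms(2) unfolding int_vertices_def by auto
    then have "e \<in> int_edges Q" unfolding int_edges_def using vw True by blast
    then show ?thesis using assms(1) by blast
  next
    case False
    then show ?thesis using vw unfolding proj_edges_iff by blast
  qed
qed

lemma chordal_sandwich_proj_edges: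
  assumes fin: "finite (int_vertices Q)" and H: "restricted_chordal_completion Q H"
  shows "chordal_sandwich (cells Q) (int_star_edges Q) (forb_edges Q) (proj_edges Q H)"
proof -
  have chordal: "chordal (int_vertices Q) H" and int: "int_edges Q \<subseteq> H"
    and restricted: "\<And>\<pi> A B. \<pi> \<in> Q \<Longrightarrow> A \<in> \<pi> \<Longrightarrow> B \<in> \<pi> \<Longrightarrow> A \<noteq> B \<Longrightarrow> {(A, \<pi>), (B, \<pi>)} \<notin> H"
    using H unfolding restricted_chordal_completion_def chordal_completion_def by blast+
  have "int_star_edges Q \<subseteq> proj_edges Q H"
  proof
    fix e assume "e \<in> int_star_edges Q"
    then obtain A B where AB: "e = {A, B}" "A \<in> cells Q" "B \<in> cells Q" "A \<noteq> B" "A \<inter> B \<noteq> {}"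
      unfolding int_star_edges_def by blast
    have "{v, w} \<in> H" if "v \<in> int_vertices Q" "w \<in> int_vertices Q" "fst v = A" "fst w = B" for v w
    proof -
      have "{v, w} \<in> int_edges Q" unfolding int_edges_def using that AB(4,5) by blast
      then show ?thesis using int by blast
    qed
    then show "e \<in> proj_edges Q H" unfolding AB(1) proj_edges_iff using AB(2-4) by blast
  qed
  moreover have "e \<notin> forb_edges Q" if "e \<in> proj_edges Q H" for e
  proof
    assume "e \<in> forb_edges Q"
    then obtain A B \<pi> where AB: "e = {A, B}" "A \<noteq> B" "\<pi> \<in> Q" "A \<in> \<pi>" "B \<in> \<pi>"
      unfolding forb_edges_def by blast
    then have "(A, \<pi>) \<in> int_vertices Q" "(B, \<pi>) \<in> int_vertices Q" unfolding int_vertices_def by auto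
    then have "{(A, \<pi>), (B, \<pi>)} \<in> H" using that AB(2) unfolding AB(1) proj_edges_iff by simp
    then show False using restricted AB(2-5) by blast
  qed
  ultimately show ?thesis
    unfolding chordal_sandwich_def using chordal_proj_edges[OF fin chordal] by blast
qed

lemma bij_betw_minimal:
  assumes f: "\<And>x. P x \<Longrightarrow> R (f x)"
    and g: "\<And>y. R y \<Longrightarrow> P (g y)" "\<And>y. R y \<Longrightarrow> f (g y) \<subseteq> y"
    and embedding: "\<And>x x'. P x \<Longrightarrow> P x' \<Longrightarrow> f x \<subseteq> f x' \<longleftrightarrow> x \<subseteq> x'"
  shows "bij_betw f {x. P x \<and> (\<forall>x'. x' \<subset> x \<longrightarrow> \<not> P x')} {y. R y \<and> (\<forall>y'. y' \<subset> y \<longrightarrow> \<not> R y')}"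
    (is "bij_betw f ?S ?T")
proof (rule bij_betw_imageI)
  have inj: "x = x'" if "P x" "P x'" "f x = f x'" for x x'
    using embedding[OF that(1,2)] embedding[OF that(2,1)] that(3) by blast
  show "inj_on f ?S" by (rule inj_onI) (use inj in blast)
  have image: "f x \<in> ?T" if x: "P x" "\<forall>x'. x' \<subset> x \<longrightarrow> \<not> P x'" for x
  proof -
    have "\<not> R y'" if "y' \<subset> f x" for y'
    proof
      assume "R y'"
      then have "f (g y') \<subset> f x" using g(2) that by blast
      then have "g y' \<subset> x" using embedding[OF g(1)[OF \<open>R y'\<close>] x(1)] by blast
      then show False using x(2) g(1) \<open>R y'\<close> by blast
    qed
    then show ?thesis using f x(1) by blast
  qed
  have preimage: "y \<in> f ` ?S" if y: "R y" "\<forall>y'. y' \<subset> y \<longrightarrow> \<not> R y'" for y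
  proof -
    have "f (g y) = y" using y f[OF g(1)] g(2) by blast
    moreover have "\<not> P x'" if "x' \<subset> g y" for x'
    proof
      assume "P x'"
      have "f x' \<subseteq> f (g y)" using embedding[OF \<open>P x'\<close> g(1)[OF y(1)]] that by blast
      moreover have "f x' \<noteq> f (g y)" using inj[OF \<open>P x'\<close> g(1)[OF y(1)]] that by blast
      ultimately have "f x' \<subset> f (g y)" by blast
      then show False using y \<open>f (g y) = y\<close> f[OF \<open>P x'\<close>] by blast
    qed
    ultimately show ?thesis using g(1)[OF y(1)] by blast
  qed
  show "f ` ?S = ?T"
  proof
    show "f ` ?S \<subseteq> ?T" using image by blast
    show "?T \<subseteq> f ` ?S" using preimage by blast
  qed
qed

theorem theorem5:
  fixes X :: "'a set" and Q :: "'a set set set"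
  assumes "finite X"
    and "\<forall>\<pi>\<in>Q. partial_partition X \<pi>"
  shows "\<exists>f. bij_betw f {E'. minimal_restricted_chordal_completion Q E'}
                        {E'. minimal_chordal_sandwich (cells Q) (int_star_edges Q) (forb_edges Q) E'}"
proof -
  let ?sandwich = "chordal_sandwich (cells Q) (int_star_edges Q) (forb_edges Q)"
  have fin: "finite (int_vertices Q)" using finite_int_vertices[OF assms] .
  have nonempty_cells: "\<forall>\<pi>\<in>Q. {} \<notin> \<pi>"
    using assms(2) unfolding partial_partition_def Ball_def by metis
  have "bij_betw (lift_edges Q)
      {F. minimal_chordal_sandwich (cells Q) (int_star_edges Q) (forb_edges Q) F}
      {H. minimal_restricted_chordal_completion Q H}"
    unfolding minimal_chordal_sandwich_def minimal_restricted_chordal_completion_def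
  proof (rule bij_betw_minimal)
    show "restricted_chordal_completion Q (lift_edges Q F)" if "?sandwich F" for F
      using that by (rule restricted_chordal_completion_lift_edges)
    show "?sandwich (proj_edges Q H)" if "restricted_chordal_completion Q H" for H
      using fin that by (rule chordal_sandwich_proj_edges)
    show "lift_edges Q (proj_edges Q H) \<subseteq> H" if "restricted_chordal_completion Q H" for H
      using that nonempty_cells unfolding restricted_chordal_completion_def chordal_completion_def
      by (elim conjE) (rule lift_proj_edges_subset)
    show "lift_edges Q F \<subseteq> lift_edges Q F' \<longleftrightarrow> F \<subseteq> F'" if "?sandwich F" for F F'
      using that unfolding chordal_sandwich_def chordal_def by (elim conjE) (rule lift_edges_subset_iff)
  qed
  then show ?thesis using bij_betw_inv_into by blast
qed

end
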